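(* If $s>0$ is small enough, then for every $1\le i\le n-1$ and $1\le j\le D_i$ there is a critical point $w_{i,j}\in\mathbb{C}\setminus\{0\}$ of $P_n$ (a solution of $\sum_{k=1}^{n-1}\frac{(-1)^{k-1}D_kz^{D_k}}{z^{D_k}-a_k^{D_k}}+(-1)^{n-1}d_n-\frac{(d_1-1)d_1z^{d_1}}{(d_1-1)z^{d_1}+1}=0$) such that $|w_{i,j}-\widetilde w_{i,j}|<s^{1/2}|a_i|$, where $\widetilde w_{i,j}=r_ia_ie^{\pi\mathrm{i}(2j-1)/D_i}$ and $r_i=(d_{i+1}/d_i)^{1/D_i}$.
   Context: $n\ge2$, $d_1,\dots,d_n$ positive integers with $\sum 1/d_i<1$, $d_{\max}=\max_i d_i$, $D_i=d_i+d_{i+1}$. $s>0$, $a_i\in\mathbb{C}$ with $|a_1|=(d_{\max}^2s)^{1/d_1}$, $|a_i|=s^{1/d_i}|a_{i-1}|$. $C_n=\sum_{i=1}^{n-1}\frac{(-1)^{i-1}D_ia_i^{D_i}}{1-a_i^{D_i}}$, $B_n=C_n/(1+C_n)$, $A_n=\frac{1}{1+C_n}\prod_{i=1}^{n-1}(1-a_i^{D_i})^{(-1)^i}$, $P_n(z)=A_n\frac{d_1z^{(-1)^{n-1}d_n}}{(d_1-1)z^{d_1}+1}\prod_{i=1}^{n-1}(z^{D_i}-a_i^{D_i})^{(-1)^{i-1}}+B_n$. *)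

theory Defs
  imports "HOL-Analysis.Analysis"
begin

text \<open>Degrees d i for i in {1..n}, parameters a i (complex), indices starting at 1.\<close>

definition DD :: "(nat \<Rightarrow> nat) \<Rightarrow> nat \<Rightarrow> nat" where
  "DD d i = d i + d (Suc i)"

definition Cn :: "nat \<Rightarrow> (nat \<Rightarrow> nat) \<Rightarrow> (nat \<Rightarrow> complex) \<Rightarrow> complex" where
  "Cn n d a = (\<Sum>i=1..n-1. (-1)^(i-1) * of_nat (DD d i) * a i ^ DD d i / (1 - a i ^ DD d i))"

definition Bn :: "nat \<Rightarrow> (nat \<Rightarrow> nat) \<Rightarrow> (nat \<Rightarrow> complex) \<Rightarrow> complex" where
  "Bn n d a = Cn n d a / (1 + Cn n d a)"

definition An :: "nat \<Rightarrow> (nat \<Rightarrow> nat) \<Rightarrow> (nat \<Rightarrow> complex) \<Rightarrow> complex" where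
  "An n d a = (1 / (1 + Cn n d a)) * (\<Prod>i=1..n-1. (1 - a i ^ DD d i) powi ((-1::int)^i))"

definition Pn :: "nat \<Rightarrow> (nat \<Rightarrow> nat) \<Rightarrow> (nat \<Rightarrow> complex) \<Rightarrow> complex \<Rightarrow> complex" where
  "Pn n d a z = An n d a * (of_nat (d 1) * z powi ((-1::int)^(n-1) * int (d n))
       / ((of_nat (d 1) - 1) * z ^ d 1 + 1))
     * (\<Prod>i=1..n-1. (z ^ DD d i - a i ^ DD d i) powi ((-1::int)^(i-1))) + Bn n d a"

text \<open>The explicit critical point equation (logarithmic derivative of P_n).\<close>
definition crit_eq :: "nat \<Rightarrow> (nat \<Rightarrow> nat) \<Rightarrow> (nat \<Rightarrow> complex) \<Rightarrow> complex \<Rightarrow> bool" where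
  "crit_eq n d a z \<longleftrightarrow>
     (\<Sum>k=1..n-1. (-1)^(k-1) * of_nat (DD d k) * z ^ DD d k / (z ^ DD d k - a k ^ DD d k))
     + (-1)^(n-1) * of_nat (d n)
     - (of_nat (d 1) - 1) * of_nat (d 1) * z ^ d 1 / ((of_nat (d 1) - 1) * z ^ d 1 + 1) = 0"

end

theory Submission
  imports Defs "HOL-Complex_Analysis.Weierstrass_Factorization"
begin

text \<open>
  Write the critical point equation of \<open>P\<^sub>n\<close> as
  \<open>\<sigma>\<^sub>i D\<^sub>i z^D\<^sub>i / (z^D\<^sub>i - a\<^sub>i^D\<^sub>i) - \<sigma>\<^sub>i d\<^sub>i\<^sub>+\<^sub>1 + R(z) = 0\<close>, \<open>\<sigma>\<^sub>i = (-1)^(i-1)\<close>: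
  the values \<open>(-1)^(k-1) D\<^sub>k\<close> at infinity of the terms with \<open>k > i\<close> telescope against
  \<open>(-1)^(n-1) d\<^sub>n\<close>. Since \<open>|a\<^sub>k|\<close> drops by the factor \<open>s^(1/d\<^sub>k)\<close> at each step, every term
  of \<open>R\<close> is \<open>O(s)\<close> on the annulus \<open>|z| \<approx> |a\<^sub>i|\<close>. With \<open>z = a\<^sub>i \<zeta>\<close> the equation becomes
  \<open>\<zeta>^D\<^sub>i = -(d\<^sub>i\<^sub>+\<^sub>1/d\<^sub>i)(1 + h(\<zeta>))\<close> with \<open>h = O(s)\<close>, and Brouwer's fixed point theorem
  for \<open>\<zeta> \<mapsto> \<zeta>\<^sub>j (1 + h(\<zeta>))^(1/D\<^sub>i)\<close> on the disc of radius \<open>\<surd>s/2\<close> around each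
  \<open>D\<^sub>i\<close>-th root \<open>\<zeta>\<^sub>j\<close> of \<open>-d\<^sub>i\<^sub>+\<^sub>1/d\<^sub>i\<close> yields a solution. The equation is
  \<open>z P\<^sub>n'(z) / (P\<^sub>n(z) - B\<^sub>n) = 0\<close>, so these are critical points of \<open>P\<^sub>n\<close>.
\<close>

section \<open>Elementary estimates\<close>

lemma norm_root_one_plus_minus_one_le:
  fixes h :: complex
  assumes "cmod h \<le> 1/4" "D \<ge> 1"
  shows "cmod (exp (Ln (1 + h) / of_nat D) - 1) \<le> 3 * cmod h"
proof -
  have "cmod (Ln (1 + h) / of_nat D) \<le> cmod (Ln (1 + h))"
    using assms(2) by (simp add: norm_divide divide_le_eq mult_le_cancel_left1)
  also have "\<dots> \<le> 2 * cmod h"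
    using assms(1) by (intro norm_Ln_le) auto
  finally have small: "cmod (Ln (1 + h) / of_nat D) \<le> 2 * cmod h" .
  have "cmod (exp (Ln (1 + h) / of_nat D) - 1) \<le> 3 / 2 * cmod (Ln (1 + h) / of_nat D)"
    using small assms(1) by (intro norm_exp_bounds) auto
  with small show ?thesis by linarith
qed

lemma root_one_plus_power:
  fixes h :: complex
  assumes "cmod h < 1" "D \<ge> 1"
  shows "exp (Ln (1 + h) / of_nat D) ^ D = 1 + h"
proof -
  have "1 + h \<noteq> 0"
    using assms(1) by (metis add.inverse_unique norm_minus_cancel norm_one order.irrefl)
  then show ?thesis
    using assms(2) by (simp flip: exp_of_nat_mult)
qed

text \<open>Brouwer's fixed point theorem for \<open>z \<mapsto> c (1 + h z)^(1/D)\<close>, with the principal root.\<close>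
lemma perturbed_root_exists:
  fixes c :: complex and h :: "complex \<Rightarrow> complex"
  assumes cont: "continuous_on (cball c \<delta>) h" and "\<delta> > 0" "D \<ge> 1"
    and small: "\<And>z. z \<in> cball c \<delta> \<Longrightarrow> cmod (h z) \<le> \<epsilon>" and "\<epsilon> \<le> 1/4"
    and radius: "3 * cmod c * \<epsilon> \<le> \<delta>"
  shows "\<exists>z\<in>cball c \<delta>. z ^ D = c ^ D * (1 + h z)"
proof -
  define T where "T z = c * exp (Ln (1 + h z) / of_nat D)" for z
  have h_quarter: "cmod (h z) \<le> 1/4" if "z \<in> cball c \<delta>" for z
    using small[OF that] \<open>\<epsilon> \<le> 1/4\<close> by linarith
  have "1 + h z \<notin> \<real>\<^sub>\<le>\<^sub>0" if "z \<in> cball c \<delta>" for z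
  proof -
    have "\<bar>Re (h z)\<bar> \<le> 1/4"
      using abs_Re_le_cmod[of "h z"] h_quarter[OF that] by linarith
    then show ?thesis by (auto simp: complex_nonpos_Reals_iff)
  qed
  then have "continuous_on (cball c \<delta>) T"
    unfolding T_def using \<open>D \<ge> 1\<close>
    by (auto intro!: continuous_intros cont continuous_on_compose2[OF continuous_on_Ln])
  moreover have "T \<in> cball c \<delta> \<rightarrow> cball c \<delta>"
  proof
    fix z assume z: "z \<in> cball c \<delta>"
    have "dist c (T z) = cmod (c * (exp (Ln (1 + h z) / of_nat D) - 1))"
      by (simp add: T_def dist_norm norm_minus_commute algebra_simps)
    also have "\<dots> = cmod c * cmod (exp (Ln (1 + h z) / of_nat D) - 1)"
      by (rule norm_mult)
    also have "\<dots> \<le> cmod c * (3 * \<epsilon>)"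
      using norm_root_one_plus_minus_one_le[OF h_quarter[OF z] \<open>D \<ge> 1\<close>] small[OF z]
      by (intro mult_left_mono) auto
    finally show "T z \<in> cball c \<delta>"
      using radius by simp
  qed
  ultimately obtain z where z: "z \<in> cball c \<delta>" "T z = z"
    using brouwer_ball[OF \<open>\<delta> > 0\<close>] by blast
  have "cmod (h z) < 1"
    using h_quarter[OF z(1)] by linarith
  then have "T z ^ D = c ^ D * (1 + h z)"
    unfolding T_def power_mult_distrib using \<open>D \<ge> 1\<close> by (simp add: root_one_plus_power)
  with z show ?thesis by auto
qed

lemma norm_div_one_minus_le:
  fixes u :: complex
  assumes "cmod u \<le> q" "q \<le> 1/2"
  shows "u \<noteq> 1" "cmod (u / (1 - u)) \<le> 2 * q"
proof -
  have far: "1/2 \<le> cmod (1 - u)"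
    using norm_triangle_ineq2[of 1 u] assms by simp
  then show "u \<noteq> 1"
    by auto
  have "cmod (u / (1 - u)) = cmod u / cmod (1 - u)"
    by (rule norm_divide)
  also have "\<dots> \<le> q / (1/2)"
    using assms far by (intro frac_le) (auto intro: order_trans[OF norm_ge_zero])
  finally show "cmod (u / (1 - u)) \<le> 2 * q"
    by simp
qed

lemma norm_power_div_power_diff_le:
  fixes z \<alpha> :: complex
  assumes "\<alpha> \<noteq> 0" "(cmod z / cmod \<alpha>) ^ D \<le> q" "q \<le> 1/2"
  shows "z ^ D \<noteq> \<alpha> ^ D" "cmod (z ^ D / (z ^ D - \<alpha> ^ D)) \<le> 2 * q"
proof -
  define u where "u = (z / \<alpha>) ^ D"
  have "cmod u \<le> q"
    using assms(2) by (simp add: u_def norm_power norm_divide)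
  note u = norm_div_one_minus_le[OF this assms(3)]
  show "z ^ D \<noteq> \<alpha> ^ D"
    using u(1) assms(1) by (auto simp: u_def power_divide)
  have "z ^ D / (z ^ D - \<alpha> ^ D) = - (u / (1 - u))"
    using u(1) assms(1) by (simp add: u_def power_divide field_simps)
  with u(2) show "cmod (z ^ D / (z ^ D - \<alpha> ^ D)) \<le> 2 * q"
    by simp
qed

lemma norm_power_div_power_diff_minus_1_le:
  fixes z \<alpha> :: complex
  assumes "z \<noteq> 0" "(cmod \<alpha> / cmod z) ^ D \<le> q" "q \<le> 1/2"
  shows "z ^ D \<noteq> \<alpha> ^ D" "cmod (z ^ D / (z ^ D - \<alpha> ^ D) - 1) \<le> 2 * q"
proof -
  define v where "v = (\<alpha> / z) ^ D"
  have "cmod v \<le> q"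
    using assms(2) by (simp add: v_def norm_power norm_divide)
  note v = norm_div_one_minus_le[OF this assms(3)]
  show "z ^ D \<noteq> \<alpha> ^ D"
    using v(1) assms(1) by (auto simp: v_def power_divide)
  have "z ^ D / (z ^ D - \<alpha> ^ D) - 1 = v / (1 - v)"
    using v(1) assms(1) by (simp add: v_def power_divide field_simps)
  with v(2) show "cmod (z ^ D / (z ^ D - \<alpha> ^ D) - 1) \<le> 2 * q"
    by simp
qed

lemma power_le_of_le_root:
  fixes x B s :: real
  assumes "0 \<le> x" "x \<le> B * s powr (1 / real p)" "1 \<le> B" "0 < p" "p \<le> D" "0 < s" "s \<le> 1"
  shows "x ^ D \<le> B ^ D * s"
proof -
  have "x ^ D \<le> (B * s powr (1 / real p)) ^ D"
    using assms(1,2) by (intro power_mono) auto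
  also have "\<dots> = B ^ D * s powr (real D / real p)"
    using assms by (simp add: power_mult_distrib powr_realpow[symmetric] powr_powr)
  also have "\<dots> \<le> B ^ D * s"
    using assms powr_mono'[of 1 "real D / real p" s] by (intro mult_left_mono) auto
  finally show ?thesis .
qed

lemma power_rotated_root:
  assumes "\<rho> > 0" "D \<ge> 1" "j \<ge> 1"
  shows "(complex_of_real (\<rho> powr (1 / real D)) * exp (complex_of_real pi * \<i> * (2 * of_nat j - 1) / of_nat D)) ^ D
           = - complex_of_real \<rho>"
proof -
  have "exp (complex_of_real pi * \<i> * (2 * of_nat j - 1) / of_nat D) ^ D = exp (of_nat (2 * j - 1) * (pi * \<i>))"
    using assms by (simp add: of_nat_diff mult_ac flip: exp_of_nat_mult)
  also have "\<dots> = exp (pi * \<i>) ^ (2 * j - 1)"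
    by (rule exp_of_nat_mult)
  also have "\<dots> = -1"
    using assms by (simp add: power_minus_odd)
  finally show ?thesis
    using assms by (simp add: power_mult_distrib powr_realpow[symmetric] powr_powr flip: of_real_power)
qed

lemma powr_between:
  fixes \<rho> M :: real
  assumes "1 / M \<le> \<rho>" "\<rho> \<le> M" "M \<ge> 1" "0 < e" "e \<le> 1"
  shows "1 / M \<le> \<rho> powr e" "\<rho> powr e \<le> M"
proof -
  have "0 < 1 / M"
    using assms(3) by simp
  then have "\<rho> > 0"
    using assms(1) by linarith
  consider "\<rho> \<ge> 1" | "\<rho> < 1" by linarith
  then have "1 / M \<le> \<rho> powr e \<and> \<rho> powr e \<le> M"
  proof cases
    case 1
    have "1 / M \<le> 1" "1 \<le> \<rho> powr e" "\<rho> powr e \<le> \<rho>"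
      using assms 1 powr_mono[of e 1 \<rho>] ge_one_powr_ge_zero[of \<rho> e] by auto
    then show ?thesis
      using assms(2) by linarith
  next
    case 2
    then show ?thesis
      using assms \<open>\<rho> > 0\<close> powr_mono'[of e 1 \<rho>] powr_le1[of e \<rho>] by auto
  qed
  then show "1 / M \<le> \<rho> powr e" "\<rho> powr e \<le> M" by auto
qed

section \<open>The critical point equation\<close>

lemma has_field_derivative_powi_div_power_plus_1:
  fixes w c K :: complex
  assumes "w \<noteq> 0" "c * w ^ m + 1 \<noteq> 0"
  shows "((\<lambda>z. K * z powi e / (c * z ^ m + 1)) has_field_derivative
     (K * w powi e / (c * w ^ m + 1)) * (of_int e / w - c * of_nat m * w ^ m / (w * (c * w ^ m + 1)))) (at w)"
proof -
  have "((\<lambda>z. K * z powi e / (c * z ^ m + 1)) has_field_derivative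
     (K * (of_int e * w powi (e - 1)) * (c * w ^ m + 1) - K * w powi e * (c * (of_nat m * w ^ (m - 1))))
       / (c * w ^ m + 1)^2) (at w)"
    using assms by (auto intro!: derivative_eq_intros simp: power2_eq_square)
  moreover have "(K * (of_int e * w powi (e - 1)) * (c * w ^ m + 1) - K * w powi e * (c * (of_nat m * w ^ (m - 1))))
       / (c * w ^ m + 1)^2
     = (K * w powi e / (c * w ^ m + 1)) * (of_int e / w - c * of_nat m * w ^ m / (w * (c * w ^ m + 1)))"
  proof -
    have powi_pred: "w powi (e - 1) = w powi e / w"
      using assms(1) by (simp add: power_int_diff)
    have power_pred: "of_nat m * w ^ (m - 1) = of_nat m * w ^ m / w"
      using assms(1) by (cases m) simp_all
    have "1 + c * w ^ m \<noteq> 0"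
      using assms(2) by (simp add: add.commute)
    then show ?thesis
      unfolding powi_pred power_pred using assms by (simp add: divide_simps power2_eq_square) algebra
  qed
  ultimately show ?thesis
    by simp
qed

lemma has_field_derivative_prod_powi:
  fixes w :: complex
  assumes "\<And>k. k \<in> A \<Longrightarrow> w ^ D k \<noteq> \<alpha> k"
  shows "((\<lambda>z. \<Prod>k\<in>A. (z ^ D k - \<alpha> k) powi \<sigma> k) has_field_derivative
     (\<Prod>k\<in>A. (w ^ D k - \<alpha> k) powi \<sigma> k)
       * (\<Sum>k\<in>A. of_int (\<sigma> k) * (of_nat (D k) * w ^ (D k - 1)) / (w ^ D k - \<alpha> k))) (at w)"
proof -
  have "((\<lambda>z. \<Prod>k\<in>A. (z ^ D k - \<alpha> k) powi \<sigma> k) has_field_derivative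
     (\<Prod>k\<in>A. (w ^ D k - \<alpha> k) powi \<sigma> k)
       * (\<Sum>k\<in>A. of_int (\<sigma> k) * (w ^ D k - \<alpha> k) powi (\<sigma> k - 1) * (of_nat (D k) * w ^ (D k - 1))
                  / (w ^ D k - \<alpha> k) powi \<sigma> k)) (at w)"
    using assms by (intro has_field_derivative_prod') (auto intro!: derivative_eq_intros)
  moreover have "of_int (\<sigma> k) * (w ^ D k - \<alpha> k) powi (\<sigma> k - 1) * y / (w ^ D k - \<alpha> k) powi \<sigma> k
      = of_int (\<sigma> k) * y / (w ^ D k - \<alpha> k)" if "k \<in> A" for k y
    using assms[OF that] by (simp add: power_int_diff field_simps)
  ultimately show ?thesis
    by (simp cong: sum.cong)
qed

definition crit_term :: "(nat \<Rightarrow> nat) \<Rightarrow> (nat \<Rightarrow> complex) \<Rightarrow> nat \<Rightarrow> complex \<Rightarrow> complex" where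
  "crit_term d a k z = (-1)^(k-1) * of_nat (DD d k) * z ^ DD d k / (z ^ DD d k - a k ^ DD d k)"

definition pole_term :: "(nat \<Rightarrow> nat) \<Rightarrow> complex \<Rightarrow> complex" where
  "pole_term d z = (of_nat (d 1) - 1) * of_nat (d 1) * z ^ d 1 / ((of_nat (d 1) - 1) * z ^ d 1 + 1)"

lemma crit_eq_iff:
  "crit_eq n d a z \<longleftrightarrow> (\<Sum>k=1..n-1. crit_term d a k z) + (-1)^(n-1) * of_nat (d n) - pole_term d z = 0"
  by (simp add: crit_eq_def crit_term_def pole_term_def)

lemma crit_eq_imp_deriv_Pn_eq_0:
  assumes "w \<noteq> 0" and no_pole: "\<forall>k\<in>{1..n-1}. w ^ DD d k \<noteq> a k ^ DD d k"
    and no_pole': "(of_nat (d 1) - 1) * w ^ d 1 + 1 \<noteq> 0" and "crit_eq n d a w"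
  shows "deriv (Pn n d a) w = 0"
proof -
  define c :: complex where "c = of_nat (d 1) - 1"
  define e :: int where "e = (-1)^(n-1) * int (d n)"
  define Q where "Q z = of_nat (d 1) * z powi e / (c * z ^ d 1 + 1)" for z :: complex
  define F where "F z = (\<Prod>k\<in>{1..n-1}. (z ^ DD d k - a k ^ DD d k) powi ((-1)^(k-1)))" for z :: complex
  define LQ where "LQ = of_int e / w - c * of_nat (d 1) * w ^ d 1 / (w * (c * w ^ d 1 + 1))"
  define LF where "LF = (\<Sum>k\<in>{1..n-1}. of_int ((-1)^(k-1)) * (of_nat (DD d k) * w ^ (DD d k - 1))
                              / (w ^ DD d k - a k ^ DD d k))"
  have "Pn n d a = (\<lambda>z. An n d a * (Q z * F z) + Bn n d a)"
    by (simp add: Pn_def Q_def F_def c_def e_def mult.assoc fun_eq_iff)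
  moreover have "(Q has_field_derivative Q w * LQ) (at w)"
    unfolding Q_def LQ_def c_def
    using assms(1) no_pole' by (rule has_field_derivative_powi_div_power_plus_1)
  moreover have "(F has_field_derivative F w * LF) (at w)"
    unfolding F_def LF_def using no_pole by (intro has_field_derivative_prod_powi) auto
  ultimately have "(Pn n d a has_field_derivative An n d a * Q w * F w * (LQ + LF)) (at w)"
    by (auto intro!: derivative_eq_intros simp: algebra_simps)
  moreover have "w * (LQ + LF) = (\<Sum>k=1..n-1. crit_term d a k w) + (-1)^(n-1) * of_nat (d n) - pole_term d w"
  proof -
    have "w * LF = (\<Sum>k=1..n-1. crit_term d a k w)"
      unfolding LF_def sum_distrib_left crit_term_def
      by (intro sum.cong) (auto simp: power_eq_if[of w] field_simps)
    moreover have "w * (c * of_nat (d 1) * w ^ d 1 / (w * (c * w ^ d 1 + 1))) = pole_term d w"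
      using assms(1) by (simp add: pole_term_def c_def)
    ultimately show ?thesis
      using assms(1) by (simp add: LQ_def e_def distrib_left right_diff_distrib)
  qed
  ultimately have "(Pn n d a has_field_derivative 0) (at w)"
    using assms(1,4) by (simp add: crit_eq_iff flip: eq_divide_eq)
  then show ?thesis
    by (rule DERIV_imp_deriv)
qed

lemma sum_alternating_DD:
  assumes "i \<le> m"
  shows "(\<Sum>k=Suc i..m. (-1)^(k-1) * of_nat (DD d k) :: 'a :: comm_ring_1)
           = (-1)^i * of_nat (d (Suc i)) - (-1)^m * of_nat (d (Suc m))"
  using assms
proof (induction m)
  case (Suc m)
  show ?case
  proof (cases "i = Suc m")
    case False
    with Suc have "(\<Sum>k=Suc i..Suc m. (-1)^(k-1) * of_nat (DD d k) :: 'a)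
        = (-1)^i * of_nat (d (Suc i)) - (-1)^m * of_nat (d (Suc m)) + (-1)^m * of_nat (DD d (Suc m))"
      by simp
    then show ?thesis
      by (simp add: DD_def algebra_simps)
  qed simp
qed simp

text \<open>For \<open>|z|\<close> comparable to \<open>|a\<^sub>i|\<close>, the terms with \<open>k < i\<close> are close to \<open>0\<close> and those
  with \<open>k > i\<close> close to their value \<open>(-1)^(k-1) D\<^sub>k\<close> at infinity, which telescope.\<close>
definition crit_rest :: "nat \<Rightarrow> (nat \<Rightarrow> nat) \<Rightarrow> (nat \<Rightarrow> complex) \<Rightarrow> nat \<Rightarrow> complex \<Rightarrow> complex" where
  "crit_rest n d a i z =
     (\<Sum>k\<in>{1..n-1}-{i}. crit_term d a k z - (if k < i then 0 else (-1)^(k-1) * of_nat (DD d k)))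
     - pole_term d z"

lemma crit_sum_split:
  assumes "i \<in> {1..n-1}"
  shows "(\<Sum>k=1..n-1. crit_term d a k z) + (-1)^(n-1) * of_nat (d n) - pole_term d z
           = crit_term d a i z + (-1)^i * of_nat (d (Suc i)) + crit_rest n d a i z"
proof -
  have "(\<Sum>k\<in>{1..n-1}-{i}. if k < i then 0 else (-1)^(k-1) * of_nat (DD d k))
      = (\<Sum>k=Suc i..n-1. (-1)^(k-1) * of_nat (DD d k) :: complex)"
    using assms by (intro sum.mono_neutral_cong_right) auto
  also have "\<dots> = (-1)^i * of_nat (d (Suc i)) - (-1)^(n-1) * of_nat (d n)"
    using assms by (subst sum_alternating_DD) auto
  finally have "(\<Sum>k=1..n-1. crit_term d a k z)
      = crit_term d a i z + (\<Sum>k\<in>{1..n-1}-{i}. crit_term d a k z - (if k < i then 0 else (-1)^(k-1) * of_nat (DD d k)))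
        + ((-1)^i * of_nat (d (Suc i)) - (-1)^(n-1) * of_nat (d n))"
    using assms by (simp add: sum.remove sum_subtractf)
  then show ?thesis
    by (simp add: crit_rest_def)
qed

lemma crit_eq_of_root_equation:
  assumes i: "i \<in> {1..n-1}" and "a i \<noteq> 0" and u: "\<zeta> ^ DD d i \<noteq> 1"
    and root: "of_nat (d i) * \<zeta> ^ DD d i
                 = - of_nat (d (Suc i)) - (-1)^(i-1) * (\<zeta> ^ DD d i - 1) * crit_rest n d a i (a i * \<zeta>)"
  shows "crit_eq n d a (a i * \<zeta>)"
proof -
  define u where "u = \<zeta> ^ DD d i"
  define \<sigma> :: complex where "\<sigma> = (-1)^(i-1)"
  define R where "R = crit_rest n d a i (a i * \<zeta>)"
  have "u \<noteq> 1"
    using u by (simp add: u_def)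
  have "crit_term d a i (a i * \<zeta>) = \<sigma> * of_nat (DD d i) * (u / (u - 1))"
    using assms by (simp add: crit_term_def \<sigma>_def u_def power_mult_distrib field_simps)
  moreover have "(-1)^i = - \<sigma>"
    using i by (simp add: \<sigma>_def power_eq_if[of "-1::complex" i])
  ultimately have "crit_term d a i (a i * \<zeta>) + (-1)^i * of_nat (d (Suc i)) + R
      = \<sigma> * of_nat (DD d i) * (u / (u - 1)) - \<sigma> * of_nat (d (Suc i)) + R"
    by simp
  also have "\<dots> = (\<sigma> * of_nat (DD d i) * u - \<sigma> * of_nat (d (Suc i)) * (u - 1) + R * (u - 1)) / (u - 1)"
    using \<open>u \<noteq> 1\<close> by (simp add: field_simps)
  also have "\<dots> = 0"
  proof -
    have "\<sigma> * \<sigma> = 1"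
      by (simp add: \<sigma>_def flip: power_add)
    moreover have "of_nat (d i) * u = - of_nat (d (Suc i)) - \<sigma> * (u - 1) * R"
      using root by (simp add: u_def \<sigma>_def R_def)
    ultimately have "\<sigma> * of_nat (DD d i) * u - \<sigma> * of_nat (d (Suc i)) * (u - 1) + R * (u - 1) = 0"
      unfolding DD_def of_nat_add by algebra
    then show ?thesis
      by simp
  qed
  finally show ?thesis
    unfolding crit_eq_iff crit_sum_split[OF i] R_def .
qed

section \<open>Estimates near the circle \<open>|z| = |a\<^sub>i|\<close>\<close>

text \<open>With \<open>M = max d\<^sub>k\<close>, \<open>ratio_bound M\<close> bounds \<open>|z/a\<^sub>k|^D\<^sub>k / s\<close> (\<open>k < i\<close>) and
  \<open>|a\<^sub>k/z|^D\<^sub>k / s\<close> (\<open>k > i\<close>) on the annulus around \<open>|a\<^sub>i|\<close>, and \<open>perturbation_bound n M * s\<close>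
  bounds the perturbation \<open>h\<close> of the root equation.\<close>
definition ratio_bound :: "nat \<Rightarrow> real" where
  "ratio_bound M = (2 * real M + 2) ^ (2 * M)"

definition perturbation_bound :: "nat \<Rightarrow> nat \<Rightarrow> real" where
  "perturbation_bound n M = 8 * real n * real M ^ 4 * ratio_bound M ^ 2"

locale critical_configuration =
  fixes n :: nat and d :: "nat \<Rightarrow> nat" and a :: "nat \<Rightarrow> complex" and s :: real
  assumes n_ge_2: "n \<ge> 2"
    and d_pos: "\<And>k. k \<in> {1..n} \<Longrightarrow> d k > 0"
    and s_pos: "0 < s"
    and s_small: "s < 1 / (6 * real (Max (d ` {1..n})) * perturbation_bound n (Max (d ` {1..n})))^2"
    and norm_a_1: "cmod (a 1) = (real (Max (d ` {1..n}))^2 * s) powr (1 / real (d 1))"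
    and norm_a_step: "\<And>k. k \<in> {2..n} \<Longrightarrow> cmod (a k) = s powr (1 / real (d k)) * cmod (a (k - 1))"
begin

definition M :: nat where
  "M = Max (d ` {1..n})"

abbreviation K :: real where
  "K \<equiv> ratio_bound M"

abbreviation C :: real where
  "C \<equiv> perturbation_bound n M"

lemma index_bounds:
  assumes "i \<in> {1..n-1}"
  shows "i \<in> {1..n}" "Suc i \<in> {1..n}"
  using assms by auto

lemma d_le_M: "k \<in> {1..n} \<Longrightarrow> d k \<le> M"
  unfolding M_def by (intro Max_ge) auto

lemma M_ge_1: "1 \<le> M"
  using d_le_M[of 1] d_pos[of 1] n_ge_2 by auto

lemma DD_bounds:
  assumes "k \<in> {1..n-1}"
  shows "1 \<le> DD d k" "DD d k \<le> 2 * M"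
  using index_bounds[OF assms] d_pos[of k] d_le_M[of k] d_le_M[of "Suc k"] by (auto simp: DD_def)

lemma K_ge_1: "1 \<le> K"
  unfolding ratio_bound_def by (rule one_le_power) simp

lemma power_le_K:
  assumes "1 \<le> B" "B \<le> 2 * real M + 2" "p \<le> 2 * M"
  shows "B ^ p \<le> K"
proof -
  have "B ^ p \<le> (2 * real M + 2) ^ p"
    using assms by (intro power_mono) auto
  also have "\<dots> \<le> K"
    unfolding ratio_bound_def using assms by (intro power_increasing) auto
  finally show ?thesis .
qed

lemma C_ge: "2 * real M ^ 3 * K \<le> C"
proof -
  have "real M ^ 3 \<le> real M ^ 4" "K \<le> K ^ 2"
    using M_ge_1 K_ge_1 by (auto intro: power_increasing simp: power2_eq_square)
  then have "2 * real M ^ 3 * K \<le> 2 * real M ^ 4 * K ^ 2"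
    using K_ge_1 by (intro mult_mono) auto
  also have "\<dots> \<le> 8 * real n * real M ^ 4 * K ^ 2"
    using n_ge_2 by (intro mult_right_mono) auto
  finally show ?thesis
    by (simp add: perturbation_bound_def)
qed

lemma C_ge_1: "1 \<le> C"
proof -
  have "1 \<le> real M ^ 3"
    using M_ge_1 by (intro one_le_power) simp
  then have "1 * 1 \<le> real M ^ 3 * K"
    using K_ge_1 by (intro mult_mono) auto
  then show ?thesis
    using C_ge by linarith
qed

lemma sqrt_s_small: "6 * real M * C * sqrt s < 1"
proof -
  have pos: "0 < 6 * real M * C"
    using M_ge_1 C_ge_1 by simp
  have "sqrt s < sqrt (1 / (6 * real M * C)^2)"
    using s_small by (simp add: M_def)
  also have "\<dots> = 1 / (6 * real M * C)"
    using pos by (simp add: real_sqrt_divide)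
  finally show ?thesis
    using pos by (simp add: field_simps)
qed

lemma sqrt_s_bounds: "real M * sqrt s \<le> 1/6" "C * sqrt s \<le> 1/6" "sqrt s \<le> 1/6"
proof -
  have small: "6 * (real M * C * sqrt s) < 1"
    using sqrt_s_small by (simp add: mult.assoc)
  have "real M * sqrt s \<le> real M * C * sqrt s" "C * sqrt s \<le> real M * C * sqrt s"
    using M_ge_1 C_ge_1 s_pos by (simp_all add: mult_right_mono mult_left_mono)
  moreover have "sqrt s \<le> real M * sqrt s"
    using M_ge_1 s_pos by (simp add: mult_right_mono)
  ultimately show "real M * sqrt s \<le> 1/6" "C * sqrt s \<le> 1/6" "sqrt s \<le> 1/6"
    using small by linarith+
qed

lemma s_le_1: "s \<le> 1"
  using sqrt_s_bounds(3) real_sqrt_le_1_iff by fastforce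

lemma C_s_le: "C * s \<le> 1/4"
proof -
  have "C * s = (C * sqrt s) * sqrt s"
    using s_pos by (simp add: mult.assoc)
  also have "\<dots> \<le> 1/6 * 1"
    using sqrt_s_bounds s_le_1 s_pos by (intro mult_mono) auto
  finally show ?thesis by simp
qed

lemma M3_K_s_le: "real M ^ 3 * K * s \<le> 1/2"
  using C_s_le mult_right_mono[OF C_ge, of s] s_pos by linarith

lemma K_s_le: "K * s \<le> 1/2"
proof -
  have "K * s \<le> real M ^ 3 * K * s"
    using M_ge_1 K_ge_1 s_pos by (simp add: mult_right_mono)
  then show ?thesis
    using M3_K_s_le by linarith
qed

lemma M_C_s_le: "3 * real M * (C * s) \<le> sqrt s / 2"
proof -
  have "3 * real M * (C * s) = (6 * real M * C * sqrt s) * (sqrt s / 2)"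
    using s_pos by (simp add: field_simps)
  also have "\<dots> \<le> 1 * (sqrt s / 2)"
    using sqrt_s_small s_pos by (intro mult_right_mono) auto
  finally show ?thesis by simp
qed

lemma norm_a_Suc:
  "1 \<le> k \<Longrightarrow> Suc k \<le> n \<Longrightarrow> cmod (a (Suc k)) = s powr (1 / real (d (Suc k))) * cmod (a k)"
  using norm_a_step[of "Suc k"] by simp

lemma norm_a_pos: "k \<in> {1..n} \<Longrightarrow> 0 < cmod (a k)"
proof (induction k)
  case (Suc k)
  have "0 < cmod (a 1)"
    unfolding norm_a_1 using M_ge_1 s_pos by (simp add: M_def)
  with Suc show ?case
    using s_pos norm_a_Suc[of k] by (cases "k = 0") auto
qed simp

lemma norm_a_antimono:
  assumes "1 \<le> k" "k \<le> l" "l \<le> n"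
  shows "cmod (a l) \<le> cmod (a k)"
  using assms
proof (induction l)
  case (Suc l)
  show ?case
  proof (cases "k = Suc l")
    case False
    with Suc have "cmod (a (Suc l)) = s powr (1 / real (d (Suc l))) * cmod (a l)" "cmod (a l) \<le> cmod (a k)"
      using norm_a_Suc[of l] by auto
    moreover have "s powr (1 / real (d (Suc l))) * cmod (a l) \<le> 1 * cmod (a l)"
      using s_pos s_le_1 by (intro mult_right_mono powr_le1) auto
    ultimately show ?thesis
      by linarith
  qed simp
qed simp

lemma norm_a_le_step:
  assumes "1 \<le> k" "k < l" "l \<le> n"
  shows "cmod (a l) \<le> s powr (1 / real (d (Suc k))) * cmod (a k)"
  using norm_a_antimono[of "Suc k" l] norm_a_Suc[of k] assms by auto

lemma norm_a_1_power: "cmod (a 1) ^ d 1 = real M ^ 2 * s"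
proof -
  have pos: "0 < real M ^ 2 * s"
    using M_ge_1 s_pos by simp
  have "cmod (a 1) ^ d 1 = ((real M ^ 2 * s) powr (1 / real (d 1))) ^ d 1"
    by (simp only: norm_a_1 M_def)
  also have "\<dots> = ((real M ^ 2 * s) powr (1 / real (d 1))) powr real (d 1)"
    using M_ge_1 s_pos by (intro powr_realpow[symmetric]) simp
  also have "\<dots> = real M ^ 2 * s"
    using pos d_pos[of 1] n_ge_2 by (simp add: powr_powr)
  finally show ?thesis .
qed

definition annulus :: "nat \<Rightarrow> complex set" where
  "annulus i = {z. cmod (a i) / (2 * real M) \<le> cmod z \<and> cmod z \<le> (real M + 1) * cmod (a i)}"

lemma annulus_nonzero:
  assumes "i \<in> {1..n}" "z \<in> annulus i"
  shows "z \<noteq> 0"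
proof -
  have "0 < cmod (a i) / (2 * real M)"
    using assms norm_a_pos[of i] M_ge_1 by simp
  with assms show ?thesis
    by (auto simp: annulus_def)
qed

lemma crit_term_small_below:
  assumes "1 \<le> k" "k < i" "i \<le> n" "z \<in> annulus i"
  shows "z ^ DD d k \<noteq> a k ^ DD d k" "cmod (crit_term d a k z) \<le> 4 * real M * K * s"
proof -
  have DD: "1 \<le> DD d k" "DD d k \<le> 2 * M"
    using assms DD_bounds[of k] by auto
  have "cmod z \<le> (real M + 1) * (s powr (1 / real (d (Suc k))) * cmod (a k))"
    using assms norm_a_le_step[of k i] M_ge_1
    by (auto simp: annulus_def intro: order_trans[OF _ mult_left_mono])
  then have "cmod z / cmod (a k) \<le> (real M + 1) * s powr (1 / real (d (Suc k)))"
    using norm_a_pos[of k] assms by (simp add: divide_le_eq mult_ac)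
  then have "(cmod z / cmod (a k)) ^ DD d k \<le> (real M + 1) ^ DD d k * s"
    using assms d_pos[of "Suc k"] s_pos s_le_1 by (intro power_le_of_le_root) (auto simp: DD_def)
  also have "\<dots> \<le> K * s"
    using DD s_pos by (intro mult_right_mono power_le_K) auto
  finally have ratio: "(cmod z / cmod (a k)) ^ DD d k \<le> K * s" .
  note small = norm_power_div_power_diff_le[OF _ ratio K_s_le]
  have "a k \<noteq> 0"
    using norm_a_pos[of k] assms by auto
  note small = small[OF this]
  show "z ^ DD d k \<noteq> a k ^ DD d k"
    by (rule small(1))
  have "cmod (crit_term d a k z) = DD d k * cmod (z ^ DD d k / (z ^ DD d k - a k ^ DD d k))"
    by (simp add: crit_term_def norm_mult norm_divide norm_power)
  also have "\<dots> \<le> (2 * real M) * (2 * (K * s))"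
    using DD small(2) by (intro mult_mono) auto
  finally show "cmod (crit_term d a k z) \<le> 4 * real M * K * s"
    by simp
qed

lemma crit_term_near_limit_above:
  assumes "1 \<le> i" "i < k" "k \<le> n - 1" "z \<in> annulus i"
  shows "z ^ DD d k \<noteq> a k ^ DD d k" "cmod (crit_term d a k z - (-1)^(k-1) * of_nat (DD d k)) \<le> 4 * real M * K * s"
proof -
  have DD: "1 \<le> DD d k" "DD d k \<le> 2 * M"
    using assms DD_bounds[of k] by auto
  have z: "0 < cmod z"
    using annulus_nonzero[of i z] assms by auto
  have "cmod (a k) = s powr (1 / real (d k)) * cmod (a (k - 1))"
    using assms by (intro norm_a_step) auto
  also have "\<dots> \<le> s powr (1 / real (d k)) * cmod (a i)"
    using assms by (intro mult_left_mono norm_a_antimono) auto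
  also have "\<dots> \<le> s powr (1 / real (d k)) * (2 * real M * cmod z)"
    using assms M_ge_1 by (intro mult_left_mono) (auto simp: annulus_def divide_le_eq mult_ac)
  finally have "cmod (a k) / cmod z \<le> (2 * real M) * s powr (1 / real (d k))"
    using z by (simp add: divide_le_eq mult_ac)
  then have "(cmod (a k) / cmod z) ^ DD d k \<le> (2 * real M) ^ DD d k * s"
    using assms d_pos[of k] M_ge_1 s_pos s_le_1 by (intro power_le_of_le_root) (auto simp: DD_def)
  also have "\<dots> \<le> K * s"
    using DD M_ge_1 s_pos by (intro mult_right_mono power_le_K) auto
  finally have ratio: "(cmod (a k) / cmod z) ^ DD d k \<le> K * s" .
  note near = norm_power_div_power_diff_minus_1_le[OF _ ratio K_s_le]
  note near = near[OF annulus_nonzero[of i z]]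
  show "z ^ DD d k \<noteq> a k ^ DD d k"
    using near(1) assms by auto
  have "crit_term d a k z - (-1)^(k-1) * of_nat (DD d k)
      = (-1)^(k-1) * of_nat (DD d k) * (z ^ DD d k / (z ^ DD d k - a k ^ DD d k) - 1)"
    by (simp add: crit_term_def algebra_simps)
  then have "cmod (crit_term d a k z - (-1)^(k-1) * of_nat (DD d k))
      = DD d k * cmod (z ^ DD d k / (z ^ DD d k - a k ^ DD d k) - 1)"
    by (simp add: norm_mult norm_power)
  also have "\<dots> \<le> (2 * real M) * (2 * (K * s))"
    using DD near(2) assms by (intro mult_mono) auto
  finally show "cmod (crit_term d a k z - (-1)^(k-1) * of_nat (DD d k)) \<le> 4 * real M * K * s"
    by simp
qed

lemma pole_term_small:
  assumes "i \<in> {1..n}" "z \<in> annulus i"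
  shows "(of_nat (d 1) - 1) * z ^ d 1 + 1 \<noteq> 0" "cmod (pole_term d z) \<le> 2 * real M ^ 4 * K * s"
proof -
  have d1: "1 \<le> d 1" "d 1 \<le> M"
    using d_pos[of 1] d_le_M[of 1] n_ge_2 by auto
  have "cmod (z ^ d 1) \<le> ((real M + 1) * cmod (a i)) ^ d 1"
    using assms by (auto simp: annulus_def norm_power intro: power_mono)
  also have "\<dots> = (real M + 1) ^ d 1 * cmod (a i) ^ d 1"
    by (rule power_mult_distrib)
  also have "\<dots> \<le> K * cmod (a 1) ^ d 1"
    using assms d1 M_ge_1 K_ge_1 norm_a_antimono[of 1 i]
    by (intro mult_mono power_le_K power_mono) auto
  also have "\<dots> = K * (real M ^ 2 * s)"
    by (simp only: norm_a_1_power)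
  finally have z_power: "cmod (z ^ d 1) \<le> K * (real M ^ 2 * s)" .
  define u where "u = - ((of_nat (d 1) - 1) * z ^ d 1)"
  have "(of_nat (d 1) - 1 :: complex) = of_nat (d 1 - 1)"
    using d1 by (simp add: of_nat_diff)
  then have "cmod u = real (d 1 - 1) * cmod (z ^ d 1)"
    by (simp add: u_def norm_mult)
  also have "\<dots> \<le> real M * (K * (real M ^ 2 * s))"
    using d1 z_power by (intro mult_mono) auto
  finally have "cmod u \<le> real M ^ 3 * K * s"
    by (simp add: power3_eq_cube power2_eq_square mult_ac)
  note small = norm_div_one_minus_le[OF this M3_K_s_le]
  show nonzero: "(of_nat (d 1) - 1) * z ^ d 1 + 1 \<noteq> 0"
    using small(1) by (auto simp: u_def add_eq_0_iff)
  have "pole_term d z = of_nat (d 1) * - (u / (1 - u))"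
    using nonzero by (simp add: pole_term_def u_def add.commute)
  then have "cmod (pole_term d z) = d 1 * cmod (u / (1 - u))"
    by (simp only: norm_mult norm_minus_cancel norm_of_nat)
  also have "\<dots> \<le> real M * (2 * (real M ^ 3 * K * s))"
    using small(2) d1 by (intro mult_mono) auto
  finally show "cmod (pole_term d z) \<le> 2 * real M ^ 4 * K * s"
    by (simp add: power_numeral_reduce mult_ac)
qed

lemma annulus_avoids_poles:
  assumes "i \<in> {1..n-1}" "z \<in> annulus i" "k \<in> {1..n-1}" "k \<noteq> i"
  shows "z ^ DD d k \<noteq> a k ^ DD d k"
  using assms crit_term_small_below[of k i z] crit_term_near_limit_above[of i k z]
  by (cases "k < i") auto

lemma norm_crit_rest_le:
  assumes "i \<in> {1..n-1}" "z \<in> annulus i"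
  shows "cmod (crit_rest n d a i z) \<le> 4 * real n * real M ^ 4 * K * s"
proof -
  let ?S = "{1..n-1} - {i}"
  have summand: "cmod (crit_term d a k z - (if k < i then 0 else (-1)^(k-1) * of_nat (DD d k))) \<le> 4 * real M * K * s"
    if "k \<in> ?S" for k
    using that assms crit_term_small_below[of k i z] crit_term_near_limit_above[of i k z]
    by (cases "k < i") auto
  have card: "real (card ?S) \<le> real n - 1"
    using assms by auto
  have MK: "0 \<le> 4 * real M * K * s" "4 * real M * K * s \<le> 4 * real M ^ 4 * K * s"
    using M_ge_1 K_ge_1 s_pos power_increasing[of 1 4 "real M"]
    by (auto intro!: mult_right_mono)
  have "cmod (crit_rest n d a i z)
      \<le> (\<Sum>k\<in>?S. cmod (crit_term d a k z - (if k < i then 0 else (-1)^(k-1) * of_nat (DD d k))))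
         + cmod (pole_term d z)"
    unfolding crit_rest_def by (intro order_trans[OF norm_triangle_ineq4] add_right_mono norm_sum)
  also have "\<dots> \<le> real (card ?S) * (4 * real M * K * s) + 2 * real M ^ 4 * K * s"
    using pole_term_small[of i z] assms by (intro add_mono sum_bounded_above summand) auto
  also have "\<dots> \<le> (real n - 1) * (4 * real M ^ 4 * K * s) + 2 * real M ^ 4 * K * s"
    using n_ge_2 MK(1) by (intro add_right_mono mult_mono[OF card MK(2)]) auto
  also have "\<dots> \<le> 4 * real n * real M ^ 4 * K * s"
    using MK n_ge_2 by (simp add: algebra_simps)
  finally show ?thesis .
qed

text \<open>For \<open>z = a\<^sub>i \<zeta>\<close> the critical point equation is equivalent to
  \<open>\<zeta>^D\<^sub>i = -(d\<^sub>i\<^sub>+\<^sub>1/d\<^sub>i) (1 + perturbation i \<zeta>)\<close>.\<close>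
definition perturbation :: "nat \<Rightarrow> complex \<Rightarrow> complex" where
  "perturbation i \<zeta> = (-1)^(i-1) * (\<zeta> ^ DD d i - 1) * crit_rest n d a i (a i * \<zeta>) / of_nat (d (Suc i))"

lemma continuous_on_perturbation:
  assumes "i \<in> {1..n-1}"
  shows "continuous_on {\<zeta>. a i * \<zeta> \<in> annulus i} (perturbation i)"
proof -
  have "(a i * \<zeta>) ^ DD d k - a k ^ DD d k \<noteq> 0"
    if "a i * \<zeta> \<in> annulus i" "k \<in> {1..n-1} - {i}" for \<zeta> k
    using annulus_avoids_poles[of i "a i * \<zeta>" k] assms that by auto
  moreover have "(of_nat (d 1) - 1) * (a i * \<zeta>) ^ d 1 + 1 \<noteq> 0" if "a i * \<zeta> \<in> annulus i" for \<zeta>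
    using pole_term_small(1)[of i "a i * \<zeta>"] index_bounds[OF assms] that by auto
  moreover have "of_nat (d (Suc i)) \<noteq> (0 :: complex)"
    using d_pos index_bounds[OF assms] by simp
  ultimately show ?thesis
    unfolding perturbation_def crit_rest_def crit_term_def pole_term_def
    by (auto intro!: continuous_intros)
qed

lemma norm_perturbation_le:
  assumes "i \<in> {1..n-1}" "a i * \<zeta> \<in> annulus i" "cmod \<zeta> \<le> real M + 1"
  shows "cmod (perturbation i \<zeta>) \<le> C * s"
proof -
  have "cmod (\<zeta> ^ DD d i - 1) \<le> (real M + 1) ^ DD d i + 1"
    using assms norm_triangle_ineq4[of "\<zeta> ^ DD d i" 1] power_mono[of "cmod \<zeta>" "real M + 1" "DD d i"]
    by (simp add: norm_power)
  also have "\<dots> \<le> 2 * K"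
    using assms DD_bounds[of i] power_le_K[of "real M + 1" "DD d i"] K_ge_1 by auto
  finally have "cmod (\<zeta> ^ DD d i - 1) \<le> 2 * K" .
  moreover have "cmod (crit_rest n d a i (a i * \<zeta>)) \<le> 4 * real n * real M ^ 4 * K * s"
    using assms by (intro norm_crit_rest_le)
  moreover have "1 \<le> real (d (Suc i))"
    using d_pos index_bounds[OF assms(1)] by (simp add: Suc_le_eq)
  ultimately have "cmod (perturbation i \<zeta>) \<le> cmod (\<zeta> ^ DD d i - 1) * cmod (crit_rest n d a i (a i * \<zeta>)) / 1"
    unfolding perturbation_def norm_mult norm_divide norm_power norm_minus_cancel norm_one norm_of_nat
      power_one mult_1
    by (intro divide_left_mono) auto
  also have "\<dots> \<le> 2 * K * (4 * real n * real M ^ 4 * K * s)"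
    using \<open>cmod (\<zeta> ^ DD d i - 1) \<le> 2 * K\<close> \<open>cmod (crit_rest n d a i (a i * \<zeta>)) \<le> _\<close>
    unfolding div_by_1 by (rule mult_mono) (use K_ge_1 in auto)
  finally show ?thesis
    by (simp add: perturbation_bound_def power2_eq_square mult_ac)
qed

definition root_centre :: "nat \<Rightarrow> nat \<Rightarrow> complex" where
  "root_centre i j = complex_of_real ((real (d (Suc i)) / real (d i)) powr (1 / real (DD d i)))
                       * exp (complex_of_real pi * \<i> * (2 * of_nat j - 1) / of_nat (DD d i))"

lemma degree_ratio_bounds:
  assumes "i \<in> {1..n-1}"
  shows "1 / real M \<le> real (d (Suc i)) / real (d i)" "real (d (Suc i)) / real (d i) \<le> real M"
proof -
  have d: "1 \<le> d i" "d i \<le> M" "1 \<le> d (Suc i)" "d (Suc i) \<le> M"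
    using index_bounds[OF assms] d_pos d_le_M by (auto simp: Suc_le_eq)
  have "1 / real M \<le> 1 / real (d i)" "1 / real (d i) \<le> real (d (Suc i)) / real (d i)"
    using d by (auto intro: divide_left_mono divide_right_mono)
  then show "1 / real M \<le> real (d (Suc i)) / real (d i)"
    by linarith
  have "real (d (Suc i)) / real (d i) \<le> real (d (Suc i))"
    using d by (auto intro: divide_left_mono[of 1 "real (d i)", simplified])
  with d show "real (d (Suc i)) / real (d i) \<le> real M"
    by linarith
qed

lemma root_centre_power:
  assumes "i \<in> {1..n-1}" "j \<in> {1..DD d i}"
  shows "root_centre i j ^ DD d i = - complex_of_real (real (d (Suc i)) / real (d i))"
  using assms index_bounds[OF assms(1)] d_pos DD_bounds[OF assms(1)]
  unfolding root_centre_def by (intro power_rotated_root) auto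

lemma norm_root_centre_bounds:
  assumes "i \<in> {1..n-1}"
  shows "1 / real M \<le> cmod (root_centre i j)" "cmod (root_centre i j) \<le> real M"
  using powr_between[OF degree_ratio_bounds[OF assms] _, of "1 / real (DD d i)"] M_ge_1 DD_bounds[OF assms]
  by (auto simp: root_centre_def norm_mult)

lemma near_root_centre_in_annulus:
  assumes "i \<in> {1..n-1}" "j \<in> {1..DD d i}" "\<zeta> \<in> cball (root_centre i j) (sqrt s / 2)"
  shows "a i * \<zeta> \<in> annulus i" "cmod \<zeta> \<le> real M + 1"
proof -
  let ?c = "root_centre i j"
  have "cmod ?c - sqrt s / 2 \<le> cmod \<zeta>" "cmod \<zeta> \<le> cmod ?c + sqrt s / 2"
    using assms(3) norm_triangle_ineq2[of ?c \<zeta>] norm_triangle_ineq3[of \<zeta> ?c]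
    by (auto simp: dist_norm norm_minus_commute)
  moreover have "1 / (2 * real M) \<le> 1 / real M - sqrt s / 2" "sqrt s / 2 \<le> 1"
    using sqrt_s_bounds(1,3) M_ge_1 by (auto simp: field_simps)
  ultimately have "1 / (2 * real M) \<le> cmod \<zeta>" "cmod \<zeta> \<le> real M + 1"
    using norm_root_centre_bounds[OF assms(1), of j] by linarith+
  then show "a i * \<zeta> \<in> annulus i" "cmod \<zeta> \<le> real M + 1"
    using norm_a_pos[OF index_bounds(1)[OF assms(1)]]
    by (auto simp: annulus_def norm_mult divide_le_eq mult_ac intro: mult_left_mono)
qed

lemma perturbed_root_near_root_centre:
  assumes "i \<in> {1..n-1}" "j \<in> {1..DD d i}"
  shows "\<exists>\<zeta>\<in>cball (root_centre i j) (sqrt s / 2).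
           \<zeta> ^ DD d i = - complex_of_real (real (d (Suc i)) / real (d i)) * (1 + perturbation i \<zeta>)"
proof -
  have "\<exists>\<zeta>\<in>cball (root_centre i j) (sqrt s / 2).
          \<zeta> ^ DD d i = root_centre i j ^ DD d i * (1 + perturbation i \<zeta>)"
  proof (rule perturbed_root_exists)
    show "continuous_on (cball (root_centre i j) (sqrt s / 2)) (perturbation i)"
      using near_root_centre_in_annulus[OF assms]
      by (intro continuous_on_subset[OF continuous_on_perturbation[OF assms(1)]]) auto
    show "cmod (perturbation i \<zeta>) \<le> C * s" if "\<zeta> \<in> cball (root_centre i j) (sqrt s / 2)" for \<zeta>
      using near_root_centre_in_annulus[OF assms that] assms(1) by (intro norm_perturbation_le)
    have "3 * cmod (root_centre i j) * (C * s) \<le> 3 * real M * (C * s)"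
      using norm_root_centre_bounds[OF assms(1)] C_ge_1 s_pos by (intro mult_right_mono) auto
    then show "3 * cmod (root_centre i j) * (C * s) \<le> sqrt s / 2"
      using M_C_s_le by simp
  qed (use s_pos DD_bounds[OF assms(1)] C_s_le in auto)
  then show ?thesis
    by (simp only: root_centre_power[OF assms])
qed

lemma critical_point_of_perturbed_root:
  assumes i: "i \<in> {1..n-1}" and ann: "a i * \<zeta> \<in> annulus i" "cmod \<zeta> \<le> real M + 1"
    and root: "\<zeta> ^ DD d i = - complex_of_real (real (d (Suc i)) / real (d i)) * (1 + perturbation i \<zeta>)"
  shows "\<forall>k\<in>{1..n-1}. (a i * \<zeta>) ^ DD d k \<noteq> a k ^ DD d k" "crit_eq n d a (a i * \<zeta>)"
proof -
  have d: "0 < d i" "0 < d (Suc i)"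
    using index_bounds[OF i] d_pos by auto
  have ai: "a i \<noteq> 0"
    using norm_a_pos index_bounds[OF i] by force
  have "\<bar>Re (perturbation i \<zeta>)\<bar> \<le> 1/4"
    using abs_Re_le_cmod[of "perturbation i \<zeta>"] norm_perturbation_le[OF i ann] C_s_le by linarith
  then have "Re (\<zeta> ^ DD d i) < 0"
    unfolding root using d by (simp add: mult_pos_pos)
  then have u: "\<zeta> ^ DD d i \<noteq> 1"
    by auto
  show "\<forall>k\<in>{1..n-1}. (a i * \<zeta>) ^ DD d k \<noteq> a k ^ DD d k"
  proof
    fix k assume k: "k \<in> {1..n-1}"
    show "(a i * \<zeta>) ^ DD d k \<noteq> a k ^ DD d k"
    proof (cases "k = i")
      case True
      then show ?thesis
        using u ai by (simp add: power_mult_distrib)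
    qed (use annulus_avoids_poles[OF i ann(1) k] in auto)
  qed
  show "crit_eq n d a (a i * \<zeta>)"
  proof (rule crit_eq_of_root_equation[where a = a, OF i ai u])
    have "of_nat (d i) * \<zeta> ^ DD d i
        = - (of_nat (d i) * complex_of_real (real (d (Suc i)) / real (d i))) * (1 + perturbation i \<zeta>)"
      using root by simp
    also have "of_nat (d i) * complex_of_real (real (d (Suc i)) / real (d i)) = of_nat (d (Suc i))"
      using d by simp
    also have "- of_nat (d (Suc i)) * (1 + perturbation i \<zeta>)
        = - of_nat (d (Suc i)) - (-1)^(i-1) * (\<zeta> ^ DD d i - 1) * crit_rest n d a i (a i * \<zeta>)"
      using d by (simp add: perturbation_def field_simps)
    finally show "of_nat (d i) * \<zeta> ^ DD d i
        = - of_nat (d (Suc i)) - (-1)^(i-1) * (\<zeta> ^ DD d i - 1) * crit_rest n d a i (a i * \<zeta>)" .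
  qed
qed

lemma critical_point_near_root_centre:
  assumes i: "i \<in> {1..n-1}" and j: "j \<in> {1..DD d i}"
  shows "\<exists>w. w \<noteq> 0
               \<and> (\<forall>k\<in>{1..n-1}. w ^ DD d k \<noteq> a k ^ DD d k)
               \<and> (of_nat (d 1) - 1) * w ^ d 1 + 1 \<noteq> 0
               \<and> deriv (Pn n d a) w = 0
               \<and> crit_eq n d a w
               \<and> cmod (w - complex_of_real ((real (d (Suc i)) / real (d i)) powr (1 / real (DD d i)))
                          * a i * exp (complex_of_real pi * \<i> * (2 * of_nat j - 1) / of_nat (DD d i)))
                 < sqrt s * cmod (a i)"
proof -
  obtain \<zeta> where \<zeta>: "\<zeta> \<in> cball (root_centre i j) (sqrt s / 2)"
    and root: "\<zeta> ^ DD d i = - complex_of_real (real (d (Suc i)) / real (d i)) * (1 + perturbation i \<zeta>)"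
    using perturbed_root_near_root_centre[OF i j] by blast
  note ann = near_root_centre_in_annulus[OF i j \<zeta>]
  have i_n: "i \<in> {1..n}"
    using index_bounds[OF i] by simp
  have w: "a i * \<zeta> \<noteq> 0" "\<forall>k\<in>{1..n-1}. (a i * \<zeta>) ^ DD d k \<noteq> a k ^ DD d k"
    "(of_nat (d 1) - 1) * (a i * \<zeta>) ^ d 1 + 1 \<noteq> 0" "crit_eq n d a (a i * \<zeta>)"
    using annulus_nonzero[OF i_n ann(1)] pole_term_small(1)[OF i_n ann(1)]
      critical_point_of_perturbed_root[OF i ann root] by auto
  have "a i * \<zeta> - root_centre i j * a i = a i * (\<zeta> - root_centre i j)"
    by (simp add: algebra_simps)
  then have "cmod (a i * \<zeta> - root_centre i j * a i) = cmod (a i) * dist \<zeta> (root_centre i j)"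
    by (simp add: dist_norm norm_mult)
  also have "\<dots> \<le> cmod (a i) * (sqrt s / 2)"
    using \<zeta> by (intro mult_left_mono) (auto simp: dist_commute)
  also have "\<dots> < sqrt s * cmod (a i)"
    using norm_a_pos[OF i_n] s_pos by simp
  finally have "cmod (a i * \<zeta> - root_centre i j * a i) < sqrt s * cmod (a i)" .
  moreover have "root_centre i j * a i
      = complex_of_real ((real (d (Suc i)) / real (d i)) powr (1 / real (DD d i)))
          * a i * exp (complex_of_real pi * \<i> * (2 * of_nat j - 1) / of_nat (DD d i))"
    by (simp add: root_centre_def mult_ac)
  ultimately show ?thesis
    using w crit_eq_imp_deriv_Pn_eq_0[OF w] by (intro exI[of _ "a i * \<zeta>"]) simp
qed

end

theorem lemma2p8:
  fixes n :: nat and d :: "nat \<Rightarrow> nat"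
  assumes "n \<ge> 2"
    and "\<And>i. i \<in> {1..n} \<Longrightarrow> d i > 0"
    and "(\<Sum>i=1..n. 1 / real (d i)) < 1"
  shows "\<exists>s0>0. \<forall>s a. 0 < s \<and> s < s0
           \<and> cmod (a 1) = (real (Max (d ` {1..n}))^2 * s) powr (1 / real (d 1))
           \<and> (\<forall>i\<in>{2..n}. cmod (a i) = s powr (1 / real (d i)) * cmod (a (i - 1)))
         \<longrightarrow> (\<forall>i\<in>{1..n-1}. \<forall>j\<in>{1..DD d i}. \<exists>w. w \<noteq> 0
               \<and> (\<forall>k\<in>{1..n-1}. w ^ DD d k \<noteq> a k ^ DD d k)
               \<and> (of_nat (d 1) - 1) * w ^ d 1 + 1 \<noteq> 0
               \<and> deriv (Pn n d a) w = 0
               \<and> crit_eq n d a w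
               \<and> cmod (w - complex_of_real ((real (d (Suc i)) / real (d i)) powr (1 / real (DD d i)))
                          * a i * exp (complex_of_real pi * \<i> * (2 * of_nat j - 1) / of_nat (DD d i)))
                 < sqrt s * cmod (a i))"
proof -
  define M where "M = Max (d ` {1..n})"
  define s0 where "s0 = 1 / (6 * real M * perturbation_bound n M)^2"
  have "0 < d 1" "d 1 \<le> M"
    using assms(1,2) by (auto simp: M_def intro!: Max_ge)
  then have "0 < 6 * real M * perturbation_bound n M"
    using assms(1) by (simp add: perturbation_bound_def ratio_bound_def)
  then have "0 < s0"
    unfolding s0_def by (intro divide_pos_pos zero_less_power) auto
  moreover have "critical_configuration n d a s"
    if "0 < s \<and> s < s0 \<and> cmod (a 1) = (real (Max (d ` {1..n}))^2 * s) powr (1 / real (d 1))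
          \<and> (\<forall>i\<in>{2..n}. cmod (a i) = s powr (1 / real (d i)) * cmod (a (i - 1)))" for s a
    using assms(1,2) that by unfold_locales (auto simp: M_def s0_def)
  ultimately show ?thesis
    using critical_configuration.critical_point_near_root_centre by blast
qed

end
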